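(* For all $i\in\mathbb{Z}$, $\beta\in\Bbbk^*$ and $0\le p\le k$, $$\lambda_\beta^i(k,p)=\binom{k}{p}_\gamma\gamma^{-(k-p)p}\prod_{l=p+1}^kR_\beta^i(l,0),$$ where the empty product (for $p=k$) equals $1$.
   Context: $\Bbbk$ is an algebraically closed field of characteristic $0$, $n\ge1$, $\gamma\in\Bbbk$ a primitive $n$-th root of unity. $\binom{k}{p}_\gamma$ denotes the Gaussian ($\gamma$-)binomial coefficient. Define $R_\beta^i(k,l)=\beta\gamma^{-l}-\gamma^{k-1-i}$ for $0\le l<k$ and $R_\beta^i(k,k)=1$. Define $\lambda_\beta^i(0,0)=1$, and for $k\ge1$: $\lambda_\beta^i(k,0)=R_\beta^i(k,0)\lambda_\beta^i(k-1,0)$, $\lambda_\beta^i(k,l)=R_\beta^i(k,l)\lambda_\beta^i(k-1,l)+\lambda_\beta^i(k-1,l-1)$ for $0<l<k$, $\lambda_\beta^i(k,k)=1$. *)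

theory Defs
  imports "HOL-Computational_Algebra.Polynomial"
begin

text \<open>Gaussian (q-)binomial coefficient, defined by the q-Pascal recursion
  (valid for any q, including roots of unity).\<close>
fun qbinom :: "'a::comm_ring_1 \<Rightarrow> nat \<Rightarrow> nat \<Rightarrow> 'a" where
  "qbinom q k 0 = 1"
| "qbinom q 0 (Suc p) = 0"
| "qbinom q (Suc k) (Suc p) = qbinom q k p + q ^ (Suc p) * qbinom q k (Suc p)"

definition Rfun :: "'a::field \<Rightarrow> 'a \<Rightarrow> int \<Rightarrow> nat \<Rightarrow> nat \<Rightarrow> 'a" where
  "Rfun \<gamma> \<beta> i k l = (if l < k then \<beta> * \<gamma> powi (- int l) - \<gamma> powi (int k - 1 - i) else 1)"

fun lam :: "'a::field \<Rightarrow> 'a \<Rightarrow> int \<Rightarrow> nat \<Rightarrow> nat \<Rightarrow> 'a" where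
  "lam \<gamma> \<beta> i 0 l = (if l = 0 then 1 else 0)"
| "lam \<gamma> \<beta> i (Suc k) l =
     (if l = Suc k then 1
      else if l = 0 then Rfun \<gamma> \<beta> i (Suc k) 0 * lam \<gamma> \<beta> i k 0
      else if l < Suc k then Rfun \<gamma> \<beta> i (Suc k) l * lam \<gamma> \<beta> i k l + lam \<gamma> \<beta> i k (l - 1)
      else 0)"

definition primitive_root :: "'a::comm_ring_1 \<Rightarrow> nat \<Rightarrow> bool" where
  "primitive_root \<gamma> n \<longleftrightarrow> \<gamma> ^ n = 1 \<and> (\<forall>m. 0 < m \<and> m < n \<longrightarrow> \<gamma> ^ m \<noteq> 1)"

definition alg_closed_field :: "'a::field itself \<Rightarrow> bool" where
  "alg_closed_field _ \<longleftrightarrow> (\<forall>f::'a poly. 0 < degree f \<longrightarrow> (\<exists>x. poly f x = 0))"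

end

theory Submission
  imports Defs
begin

(* The right-hand side satisfies the recursion defining lambda.  In the inductive step
   lambda(k+1, m+1) = R(k+1, m+1) lambda(k, m+1) + lambda(k, m), all three terms share the factor
   gamma^(-(k-m)(m+1)) * prod_{l=m+2..k} R(l, 0).  After cancelling it and writing each R(K, l) as
   beta gamma^(-l) - gamma^(K-1) c with c = gamma^(-i), the coefficient of beta is the dual q-Pascal
   rule [k+1, m+1] = [k, m+1] + gamma^(k-m) [k, m], and the coefficient of c is the defining one
   [k+1, m+1] = [k, m] + gamma^(m+1) [k, m+1]. *)

lemma qbinom_eq_0: "k < p \<Longrightarrow> qbinom q k p = 0"
  by (induction q k p rule: qbinom.induct) auto

lemma qbinom_same [simp]: "qbinom q k k = 1"
  by (induction k) (simp_all add: qbinom_eq_0)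

lemma qbinom_Suc_Suc_dual:
  "qbinom q (Suc k) (Suc p) = qbinom q k (Suc p) + q ^ (k - p) * qbinom q k p"
proof (induction k arbitrary: p)
  case 0
  then show ?case by (cases p) simp_all
next
  case (Suc k)
  consider "p = 0" | m where "p = Suc m" "m < k" | m where "p = Suc m" "k \<le> m"
    by (metis not0_implies_Suc not_less)
  then show ?case
  proof cases
    case 1
    then show ?thesis using Suc.IH [of 0] by (simp add: algebra_simps)
  next
    case (2 m)
    then have split_power: "q ^ (k - m) = q * q ^ (k - Suc m)"
      by (simp flip: power_Suc add: Suc_diff_Suc)
    have "qbinom q (Suc (Suc k)) (Suc p)
        = qbinom q (Suc k) (Suc m) + q ^ Suc (Suc m) * qbinom q (Suc k) (Suc (Suc m))"
      unfolding \<open>p = Suc m\<close> by (rule qbinom.simps(3))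
    also have "\<dots> = (qbinom q k (Suc m) + q ^ (k - m) * qbinom q k m)
        + q ^ Suc (Suc m) * (qbinom q k (Suc (Suc m)) + q ^ (k - Suc m) * qbinom q k (Suc m))"
      unfolding Suc.IH ..
    also have "\<dots> = (qbinom q k (Suc m) + q ^ Suc (Suc m) * qbinom q k (Suc (Suc m)))
        + q ^ (k - m) * (qbinom q k m + q ^ Suc m * qbinom q k (Suc m))"
      unfolding split_power by (simp add: algebra_simps)
    also have "\<dots> = qbinom q (Suc k) (Suc p) + q ^ (Suc k - p) * qbinom q (Suc k) p"
      unfolding \<open>p = Suc m\<close> by simp
    finally show ?thesis .
  next
    case (3 m)
    then show ?thesis by (auto simp: qbinom_eq_0 le_less)
  qed
qed

lemma qbinom_Suc_Suc_mult_diff: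
  fixes q \<beta> c :: "'a::comm_ring_1"
  assumes "m \<le> k"
  shows "qbinom q (Suc k) (Suc m) * (\<beta> - q ^ k * c)
    = qbinom q k (Suc m) * (\<beta> - q ^ (k + Suc m) * c) + q ^ (k - m) * qbinom q k m * (\<beta> - q ^ m * c)"
proof -
  obtain d where k: "k = m + d"
    using assms le_Suc_ex by blast
  have beta_part: "qbinom q (Suc k) (Suc m) * \<beta> = qbinom q k (Suc m) * \<beta> + q ^ (k - m) * qbinom q k m * \<beta>"
    by (simp only: qbinom_Suc_Suc_dual distrib_right)
  have c_part: "qbinom q (Suc k) (Suc m) * (q ^ k * c)
      = qbinom q k (Suc m) * (q ^ (k + Suc m) * c) + q ^ (k - m) * qbinom q k m * (q ^ m * c)"
    unfolding k by (simp add: algebra_simps power_add)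
  show ?thesis
    unfolding right_diff_distrib beta_part c_part by (simp add: algebra_simps)
qed

lemma Rfun_less:
  fixes \<gamma> \<beta> :: "'a::field"
  assumes "\<gamma> \<noteq> 0" "l < K"
  shows "Rfun \<gamma> \<beta> i K l = \<beta> * \<gamma> powi (- int l) - \<gamma> ^ (K - 1) * \<gamma> powi (- i)"
proof -
  have "int K - 1 - i = int (K - 1) + - i"
    using assms(2) by simp
  then have "\<gamma> powi (int K - 1 - i) = \<gamma> ^ (K - 1) * \<gamma> powi (- i)"
    using assms(1) by (metis power_int_add power_int_of_nat)
  then show ?thesis
    using assms(2) by (simp add: Rfun_def)
qed

definition lam_closed :: "'a::field \<Rightarrow> 'a \<Rightarrow> int \<Rightarrow> nat \<Rightarrow> nat \<Rightarrow> 'a" where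
  "lam_closed \<gamma> \<beta> i k p =
    qbinom \<gamma> k p * \<gamma> powi (- (int (k - p) * int p)) * (\<Prod>l = p + 1..k. Rfun \<gamma> \<beta> i l 0)"

lemma lam_closed_same [simp]: "lam_closed \<gamma> \<beta> i k k = 1"
  by (simp add: lam_closed_def)

lemma lam_closed_Suc_0: "lam_closed \<gamma> \<beta> i (Suc k) 0 = Rfun \<gamma> \<beta> i (Suc k) 0 * lam_closed \<gamma> \<beta> i k 0"
  by (simp add: lam_closed_def)

lemma lam_closed_Suc_Suc:
  fixes \<gamma> \<beta> :: "'a::field"
  assumes \<gamma>: "\<gamma> \<noteq> 0" and "m < k"
  shows "lam_closed \<gamma> \<beta> i (Suc k) (Suc m)
    = Rfun \<gamma> \<beta> i (Suc k) (Suc m) * lam_closed \<gamma> \<beta> i k (Suc m) + lam_closed \<gamma> \<beta> i k m"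
proof -
  obtain d where k: "k = Suc (m + d)"
    using \<open>m < k\<close> less_imp_Suc_add by blast
  define A where "A = (\<Prod>l = m + 2..k. Rfun \<gamma> \<beta> i l 0)"
  define w where "w = \<gamma> powi (- (int (Suc d) * int (Suc m)))"
  define c where "c = \<gamma> powi (- i)"
  have pow_step: "\<gamma> powi (- int (Suc m)) * \<gamma> powi (- (int d * int (Suc m))) = w"
    unfolding w_def using \<gamma> by (simp add: power_int_add [symmetric] algebra_simps)
  have pow_top: "\<gamma> ^ k * \<gamma> powi (- (int d * int (Suc m))) = \<gamma> ^ (k + Suc m) * w"
    unfolding w_def k using \<gamma> by (simp add: power_int_add [symmetric] power_int_of_nat [symmetric] algebra_simps)
  have pow_shift: "\<gamma> powi (- (int (Suc d) * int m)) = \<gamma> ^ (k - m) * w"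
    unfolding w_def k using \<gamma> by (simp add: power_int_add [symmetric] power_int_of_nat [symmetric] algebra_simps)
  have R_top: "Rfun \<gamma> \<beta> i (Suc k) 0 = \<beta> - \<gamma> ^ k * c"
    and R_bottom: "Rfun \<gamma> \<beta> i (Suc m) 0 = \<beta> - \<gamma> ^ m * c"
    and R_step: "Rfun \<gamma> \<beta> i (Suc k) (Suc m) = \<beta> * \<gamma> powi (- int (Suc m)) - \<gamma> ^ k * c"
    using Rfun_less [OF \<gamma>] \<open>m < k\<close> unfolding c_def by simp_all
  have gaps: "Suc k - Suc m = Suc d" "k - Suc m = d" "k - m = Suc d"
    using k by simp_all
  have prod_top: "(\<Prod>l = Suc m + 1..Suc k. Rfun \<gamma> \<beta> i l 0) = A * Rfun \<gamma> \<beta> i (Suc k) 0"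
    unfolding A_def k by simp
  have prod_bottom: "(\<Prod>l = m + 1..k. Rfun \<gamma> \<beta> i l 0) = Rfun \<gamma> \<beta> i (Suc m) 0 * A"
    unfolding A_def k by (simp add: prod.atLeast_Suc_atMost)
  have step_term: "Rfun \<gamma> \<beta> i (Suc k) (Suc m) * lam_closed \<gamma> \<beta> i k (Suc m)
      = w * A * (qbinom \<gamma> k (Suc m) * (\<beta> - \<gamma> ^ (k + Suc m) * c))"
  proof -
    have "Rfun \<gamma> \<beta> i (Suc k) (Suc m) * lam_closed \<gamma> \<beta> i k (Suc m)
        = (\<beta> * (\<gamma> powi (- int (Suc m)) * \<gamma> powi (- (int d * int (Suc m))))
          - \<gamma> ^ k * \<gamma> powi (- (int d * int (Suc m))) * c) * A * qbinom \<gamma> k (Suc m)"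
      unfolding lam_closed_def R_step gaps(2) A_def by (simp add: algebra_simps)
    then show ?thesis
      unfolding pow_step pow_top by (simp add: algebra_simps)
  qed
  have shift_term: "lam_closed \<gamma> \<beta> i k m = w * A * (\<gamma> ^ (k - m) * qbinom \<gamma> k m * (\<beta> - \<gamma> ^ m * c))"
    unfolding lam_closed_def gaps(3) prod_bottom R_bottom pow_shift [unfolded gaps(3)] by (simp add: algebra_simps)
  have "lam_closed \<gamma> \<beta> i (Suc k) (Suc m) = w * A * (qbinom \<gamma> (Suc k) (Suc m) * (\<beta> - \<gamma> ^ k * c))"
    unfolding lam_closed_def prod_top R_top w_def gaps(1) by (simp only: ac_simps)
  also have "\<dots> = w * A * (qbinom \<gamma> k (Suc m) * (\<beta> - \<gamma> ^ (k + Suc m) * c)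
      + \<gamma> ^ (k - m) * qbinom \<gamma> k m * (\<beta> - \<gamma> ^ m * c))"
    using \<open>m < k\<close> by (simp only: qbinom_Suc_Suc_mult_diff less_imp_le)
  also have "\<dots> = Rfun \<gamma> \<beta> i (Suc k) (Suc m) * lam_closed \<gamma> \<beta> i k (Suc m) + lam_closed \<gamma> \<beta> i k m"
    unfolding step_term shift_term by (simp add: algebra_simps)
  finally show ?thesis .
qed

lemma lam_eq_lam_closed:
  fixes \<gamma> \<beta> :: "'a::field"
  assumes "\<gamma> \<noteq> 0" and "p \<le> k"
  shows "lam \<gamma> \<beta> i k p = lam_closed \<gamma> \<beta> i k p"
  using \<open>p \<le> k\<close>
proof (induction k arbitrary: p)
  case 0
  then show ?case by simp
next
  case (Suc k)
  consider "p = Suc k" | "p = 0" | m where "p = Suc m" "m < k"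
    using Suc.prems by (cases p) (auto simp: le_less)
  then show ?case
  proof cases
    case 1
    then show ?thesis by simp
  next
    case 2
    then show ?thesis
      using Suc.IH [of 0] by (simp add: lam_closed_Suc_0)
  next
    case 3
    then show ?thesis
      using Suc.IH [of m] Suc.IH [of "Suc m"] by (simp add: lam_closed_Suc_Suc [OF \<open>\<gamma> \<noteq> 0\<close>])
  qed
qed

lemma primitive_root_nonzero:
  fixes \<gamma> :: "'a::comm_ring_1"
  assumes "primitive_root \<gamma> n" and "n \<ge> 1"
  shows "\<gamma> \<noteq> 0"
  using assms by (auto simp: primitive_root_def power_0_left)

theorem proposition3p12:
  fixes \<gamma> \<beta> :: "'a::field_char_0" and n :: nat and i :: int and k p :: nat
  assumes "alg_closed_field TYPE('a)"
    and "n \<ge> 1"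
    and "primitive_root \<gamma> n"
    and "\<beta> \<noteq> 0"
    and "p \<le> k"
  shows "lam \<gamma> \<beta> i k p =
    qbinom \<gamma> k p * \<gamma> powi (- (int (k - p) * int p)) * (\<Prod>l = p + 1..k. Rfun \<gamma> \<beta> i l 0)"
proof -
  have "\<gamma> \<noteq> 0"
    using primitive_root_nonzero assms(2,3) by blast
  then show ?thesis
    using lam_eq_lam_closed \<open>p \<le> k\<close> unfolding lam_closed_def by blast
qed

end
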